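(* Let $C$ be a program. Then: (1) (mut) $\mathsf{ert}[\![\langle e\rangle:=e']\!]([e\mapsto e'])\preceq[e\mapsto -]$; (2) (lkp) $\mathsf{ert}[\![x:=\langle e\rangle]\!]\big([x=z\wedge\mathsf{emp}]\oplus[e[x/y]\mapsto z]\big)\preceq[x=y\wedge\mathsf{emp}]\oplus[e\mapsto z]$; (3) (alc) if $x$ does not occur in $e$, then $\mathsf{ert}[\![x:=\mathtt{alloc}(e)]\!]\big(\bigoplus_{i=1}^{e}[x+i-1\mapsto 0]\big)\preceq[\mathsf{emp}]$; (4) (aux) for all $f,g\in\mathbb{T}$ and every variable $y$ not occurring in $C$: $\mathsf{ert}[\![C]\!](f)\preceq g$ implies $\mathsf{ert}[\![C]\!](\inf y\colon f)\preceq\inf y\colon g$.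
   Context: States and programs. Fix a finite set $\mathrm{Vars}$ of variables; values are $\mathbb{N}$, locations are $\mathbb{N}_{>0}$. A stack is $s\colon \mathrm{Vars}\to\mathbb{N}$; a heap is a partial map $h$ from a finite set $\mathrm{dom}(h)\subseteq\mathbb{N}_{>0}$ to $\mathbb{N}$. $h_1\perp h_2$ means disjoint domains; then $h_1\star h_2$ is their union; $h_\emptyset$ is the empty heap. $\mathsf{States}$ is the set of pairs $(s,h)$. $s(e)$ is the value of a (heap-independent) arithmetic expression $e$ under $s$, $s\models\varphi$ means the Boolean expression $\varphi$ holds under $s$, $s[x\mapsto v]$ is the updated stack; $e[x/y]$ is syntactic substitution of variable $y$ for $x$ in $e$. Programs are generated by $C ::= \mathtt{tick}(e) \mid x:=e \mid x:=\mathtt{alloc}(e) \mid \langle e\rangle:=e' \mid x:=\langle e\rangle \mid \mathtt{free}(e) \mid \{C\}[p]\{C\} \mid \mathtt{if}(\varphi)\{C\}\mathtt{else}\{C\} \mid C;C \mid \mathtt{while}(\varphi)\{C\}$, where $p$ is an expression with $s(p)\in[0,1]\cap\mathbb{Q}$ for all $s$. Runtimes. $\mathbb{T}$ is the set of functions $\mathsf{States}\to[0,\infty]$, ordered pointwise by $\preceq$; arithmetic is pointwise with $0\cdot\infty=0$. $[\varphi]$ is the $0/1$-valued Iverson bracket. Truncated subtraction: $a\dot- b=\max(a-b,0)$, $\infty\dot- b=\infty$ for finite $b$, $a\dot-\infty=0$. $(f\oplus g)(s,h)=\min\{f(s,h_1)+g(s,h_2)\mid h=h_1\star h_2\}$;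 $(f \mathbin{-\!\!\ominus} g)(s,h)=\sup\{g(s,h\star h')\dot- f(s,h')\mid h'\perp h\}$; $(\inf y\colon f)(s,h)=\inf_{v\in\mathbb{N}} f(s[y\mapsto v],h)$, $(\sup y\colon f)(s,h)=\sup_{v\in\mathbb{N}}f(s[y\mapsto v],h)$; $f[x/e](s,h)=f(s[x\mapsto s(e)],h)$. Atomic ($0/\infty$-valued) runtimes: $[\mathsf{emp}](s,h)=0$ if $h=h_\emptyset$, else $\infty$; $[\varphi\wedge\mathsf{emp}](s,h)=0$ if $s\models\varphi$ and $h=h_\emptyset$, else $\infty$; $\mathsf{tm}(e)(s,h)=s(e)$ if $h=h_\emptyset$, else $\infty$; $[e\mapsto e'](s,h)=0$ if $\mathrm{dom}(h)=\{s(e)\}$ and $h(s(e))=s(e')$, else $\infty$; $[e\mapsto -](s,h)=0$ if $\mathrm{dom}(h)=\{s(e)\}$, else $\infty$; $\bigoplus_{i=1}^{e} f_i$ is evaluated at $(s,h)$ as the separating sum over $i=1,\dots,s(e)$ (empty one: $[\mathsf{emp}]$). Expected runtime transformer $\mathsf{ert}[\![C]\!]\colon\mathbb{T}\to\mathbb{T}$ (with $v$ fresh): $\mathsf{ert}[\![\mathtt{tick}(e)]\!](f)=\mathsf{tm}(e)\oplus f$; $\mathsf{ert}[\![x:=e]\!](f)=f[x/e]$; $\mathsf{ert}[\![x:=\mathtt{alloc}(e)]\!](f)=\sup v\colon (\bigoplus_{i=1}^{e}[v+i-1\mapsto 0])\mathbin{-\!\!\ominus} f[x/v]$; $\mathsf{ert}[\![\langle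 e\rangle:=e']\!](f)=[e\mapsto-]\oplus([e\mapsto e']\mathbin{-\!\!\ominus} f)$; $\mathsf{ert}[\![x:=\langle e\rangle]\!](f)=\inf v\colon [e\mapsto v]\oplus([e\mapsto v]\mathbin{-\!\!\ominus} f[x/v])$; $\mathsf{ert}[\![\mathtt{free}(e)]\!](f)=[e\mapsto-]\oplus f$; $\mathsf{ert}[\![C_1;C_2]\!](f)=\mathsf{ert}[\![C_1]\!](\mathsf{ert}[\![C_2]\!](f))$; conditional: $[\varphi]\cdot\mathsf{ert}[\![C_1]\!](f)+[\neg\varphi]\cdot\mathsf{ert}[\![C_2]\!](f)$; probabilistic choice: $p\cdot\mathsf{ert}[\![C_1]\!](f)+(1-p)\cdot\mathsf{ert}[\![C_2]\!](f)$; $\mathsf{ert}[\![\mathtt{while}(\varphi)\{C\}]\!](f)=\mathrm{lfp}\, g.\ [\neg\varphi]\cdot f+[\varphi]\cdot\mathsf{ert}[\![C]\!](g)$ (least fixed point in $(\mathbb{T},\preceq)$). *)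

theory Defs
  imports Main "HOL-Library.Extended_Nonnegative_Real"
begin

typedef heap = "{h :: nat \<rightharpoonup> nat. finite (dom h) \<and> 0 \<notin> dom h}"
  morphisms hmap Abs_heap
  by (rule exI[of _ Map.empty]) auto

type_synonym 'v stack = "'v \<Rightarrow> nat"
type_synonym 'v state = "'v stack \<times> heap"
type_synonym 'v rt = "'v state \<Rightarrow> ennreal"

text \<open>Expressions are heap-independent and modelled semantically (shallow embedding).\<close>
type_synonym 'v aexp = "'v stack \<Rightarrow> nat"
type_synonym 'v bexp = "'v stack \<Rightarrow> bool"
type_synonym 'v pexp = "'v stack \<Rightarrow> real"

definition hdisj :: "heap \<Rightarrow> heap \<Rightarrow> bool" where
  "hdisj h1 h2 \<longleftrightarrow> dom (hmap h1) \<inter> dom (hmap h2) = {}"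

definition hunion :: "heap \<Rightarrow> heap \<Rightarrow> heap" where
  "hunion h1 h2 = Abs_heap (hmap h1 ++ hmap h2)"

definition hempty :: heap where
  "hempty = Abs_heap Map.empty"

text \<open>Truncated subtraction with a - \<infinity> = 0 and \<infinity> - b = \<infinity> for finite b.\<close>
definition tsub :: "ennreal \<Rightarrow> ennreal \<Rightarrow> ennreal" where
  "tsub a b = (if b = top then 0 else a - b)"

definition sepadd :: "'v rt \<Rightarrow> 'v rt \<Rightarrow> 'v rt" where
  "sepadd f g = (\<lambda>(s, h). INF p \<in> {(h1, h2). hdisj h1 h2 \<and> h = hunion h1 h2}.
                     f (s, fst p) + g (s, snd p))"

definition sepimp :: "'v rt \<Rightarrow> 'v rt \<Rightarrow> 'v rt" where
  "sepimp f g = (\<lambda>(s, h). SUP h' \<in> {h'. hdisj h' h}. tsub (g (s, hunion h h')) (f (s, h')))"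

definition inf_var :: "'v \<Rightarrow> 'v rt \<Rightarrow> 'v rt" where
  "inf_var y f = (\<lambda>(s, h). INF v::nat. f (s(y := v), h))"

definition sup_var :: "'v \<Rightarrow> 'v rt \<Rightarrow> 'v rt" where
  "sup_var y f = (\<lambda>(s, h). SUP v::nat. f (s(y := v), h))"

definition subst_rt :: "'v rt \<Rightarrow> 'v \<Rightarrow> 'v aexp \<Rightarrow> 'v rt" where
  "subst_rt f x e = (\<lambda>(s, h). f (s(x := e s), h))"

text \<open>Syntactic substitution e[x/y] of variable y for x, semantically.\<close>
definition subst_exp :: "'v aexp \<Rightarrow> 'v \<Rightarrow> 'v \<Rightarrow> 'v aexp" where
  "subst_exp e x y = (\<lambda>s. e (s(x := s y)))"

definition iverson :: "'v bexp \<Rightarrow> 'v rt \<Rightarrow> 'v rt" where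
  "iverson \<phi> f = (\<lambda>(s, h). if \<phi> s then f (s, h) else 0)"

definition emp_rt :: "'v rt" where
  "emp_rt = (\<lambda>(s, h). if h = hempty then 0 else top)"

definition emp_and :: "'v bexp \<Rightarrow> 'v rt" where
  "emp_and \<phi> = (\<lambda>(s, h). if \<phi> s \<and> h = hempty then 0 else top)"

definition tm :: "'v aexp \<Rightarrow> 'v rt" where
  "tm e = (\<lambda>(s, h). if h = hempty then of_nat (e s) else top)"

definition pt :: "'v aexp \<Rightarrow> 'v aexp \<Rightarrow> 'v rt" where
  "pt e e' = (\<lambda>(s, h). if dom (hmap h) = {e s} \<and> hmap h (e s) = Some (e' s) then 0 else top)"

definition pt_any :: "'v aexp \<Rightarrow> 'v rt" where
  "pt_any e = (\<lambda>(s, h). if dom (hmap h) = {e s} then 0 else top)"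

fun bigsep_n :: "nat \<Rightarrow> (nat \<Rightarrow> 'v rt) \<Rightarrow> 'v rt" where
  "bigsep_n 0 F = emp_rt"
| "bigsep_n (Suc n) F = sepadd (bigsep_n n F) (F (Suc n))"

text \<open>Separating sum over i = 1, ..., s(e).\<close>
definition bigsep :: "'v aexp \<Rightarrow> (nat \<Rightarrow> 'v rt) \<Rightarrow> 'v rt" where
  "bigsep e F = (\<lambda>(s, h). bigsep_n (e s) F (s, h))"

datatype 'v prog =
    Tick "'v aexp"
  | Assign 'v "'v aexp"
  | Alloc 'v "'v aexp"
  | Mut "'v aexp" "'v aexp"
  | Lookup 'v "'v aexp"
  | Free "'v aexp"
  | PChoice "'v prog" "'v pexp" "'v prog"
  | If "'v bexp" "'v prog" "'v prog"
  | Seq "'v prog" "'v prog"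
  | While "'v bexp" "'v prog"

primrec wf_prog :: "'v prog \<Rightarrow> bool" where
  "wf_prog (Tick e) = True"
| "wf_prog (Assign x e) = True"
| "wf_prog (Alloc x e) = True"
| "wf_prog (Mut e e') = True"
| "wf_prog (Lookup x e) = True"
| "wf_prog (Free e) = True"
| "wf_prog (PChoice C1 p C2) =
     (wf_prog C1 \<and> wf_prog C2 \<and> (\<forall>s. p s \<in> \<rat> \<and> 0 \<le> p s \<and> p s \<le> 1))"
| "wf_prog (If b C1 C2) = (wf_prog C1 \<and> wf_prog C2)"
| "wf_prog (Seq C1 C2) = (wf_prog C1 \<and> wf_prog C2)"
| "wf_prog (While b C) = wf_prog C"

text \<open>Semantic rendering of "variable y does not occur in the expression e".\<close>
definition indep :: "'v \<Rightarrow> ('v stack \<Rightarrow> 'a) \<Rightarrow> bool" where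
  "indep y e \<longleftrightarrow> (\<forall>s v. e (s(y := v)) = e s)"

primrec notin_prog :: "'v \<Rightarrow> 'v prog \<Rightarrow> bool" where
  "notin_prog y (Tick e) = indep y e"
| "notin_prog y (Assign x e) = (y \<noteq> x \<and> indep y e)"
| "notin_prog y (Alloc x e) = (y \<noteq> x \<and> indep y e)"
| "notin_prog y (Mut e e') = (indep y e \<and> indep y e')"
| "notin_prog y (Lookup x e) = (y \<noteq> x \<and> indep y e)"
| "notin_prog y (Free e) = indep y e"
| "notin_prog y (PChoice C1 p C2) = (notin_prog y C1 \<and> notin_prog y C2 \<and> indep y p)"
| "notin_prog y (If b C1 C2) = (indep y b \<and> notin_prog y C1 \<and> notin_prog y C2)"
| "notin_prog y (Seq C1 C2) = (notin_prog y C1 \<and> notin_prog y C2)"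
| "notin_prog y (While b C) = (indep y b \<and> notin_prog y C)"

primrec ert :: "'v prog \<Rightarrow> 'v rt \<Rightarrow> 'v rt" where
  "ert (Tick e) f = sepadd (tm e) f"
| "ert (Assign x e) f = subst_rt f x e"
| "ert (Alloc x e) f = (\<lambda>(s, h). SUP v::nat.
      sepimp (bigsep e (\<lambda>i. pt (\<lambda>_. v + i - 1) (\<lambda>_. 0))) (subst_rt f x (\<lambda>_. v)) (s, h))"
| "ert (Mut e e') f = sepadd (pt_any e) (sepimp (pt e e') f)"
| "ert (Lookup x e) f = (\<lambda>(s, h). INF v::nat.
      sepadd (pt e (\<lambda>_. v)) (sepimp (pt e (\<lambda>_. v)) (subst_rt f x (\<lambda>_. v))) (s, h))"
| "ert (Free e) f = sepadd (pt_any e) f"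
| "ert (PChoice C1 p C2) f = (\<lambda>(s, h).
      ennreal (p s) * ert C1 f (s, h) + ennreal (1 - p s) * ert C2 f (s, h))"
| "ert (If b C1 C2) f = (\<lambda>\<sigma>. iverson b (ert C1 f) \<sigma> + iverson (\<lambda>s. \<not> b s) (ert C2 f) \<sigma>)"
| "ert (Seq C1 C2) f = ert C1 (ert C2 f)"
| "ert (While b C) f =
      lfp (\<lambda>g \<sigma>. iverson (\<lambda>s. \<not> b s) f \<sigma> + iverson b (ert C g) \<sigma>)"

end

theory Submission
  imports Defs
begin

text \<open>
  Each right-hand side is \<open>\<infinity>\<close> unless the heap has
  the described shape; in that case one splits the heap so that the left summand of the separating
  sum takes all of it, leaving the empty heap to the magic wand, which vanishes there because its
  conclusion is bounded by its premise (for (alc) the heap is empty to begin with).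

  For (aux), \<open>ert C\<close> maps runtimes that do not depend on \<open>y\<close> to runtimes that do not depend
  on \<open>y\<close> when \<open>y\<close> does not occur in \<open>C\<close> (for loops by transfinite induction on the fixed-point
  iteration). As \<open>inf y: f\<close> is independent of \<open>y\<close> and below \<open>f\<close>, monotonicity makes
  \<open>ert C (inf y: f)\<close> a \<open>y\<close>-independent lower bound of \<open>g\<close>, hence a lower bound of \<open>inf y: g\<close>.
\<close>

lemma hmap_hempty [simp]: "hmap hempty = Map.empty"
  unfolding hempty_def by (simp add: Abs_heap_inverse)

lemma hunion_hempty [simp]: "hunion h hempty = h" "hunion hempty h = h"
  unfolding hunion_def by (simp_all add: hmap_inverse)

lemma hdisj_hempty [simp]: "hdisj h hempty" "hdisj hempty h"
  unfolding hdisj_def by auto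

lemma sepadd_le_split:
  "hdisj h1 h2 \<Longrightarrow> sepadd f g (s, hunion h1 h2) \<le> f (s, h1) + g (s, h2)"
  unfolding sepadd_def by (auto intro!: INF_lower2[of "(h1, h2)"])

lemma sepadd_le_hempty_right: "sepadd f g (s, h) \<le> f (s, h) + g (s, hempty)"
  using sepadd_le_split[of h hempty f g s] by simp

lemma sepadd_emp_and:
  "sepadd (emp_and \<phi>) g (s, h) = (if \<phi> s then g (s, h) else top)"
proof (cases "\<phi> s")
  case True
  have "sepadd (emp_and \<phi>) g (s, h) \<le> g (s, h)"
    using sepadd_le_split[of hempty h "emp_and \<phi>" g s] True by (simp add: emp_and_def)
  moreover have "g (s, h) \<le> sepadd (emp_and \<phi>) g (s, h)"
    unfolding sepadd_def emp_and_def by (auto intro!: INF_greatest)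
  ultimately show ?thesis
    using True by simp
next
  case False
  then show ?thesis
    unfolding sepadd_def emp_and_def by simp
qed

lemma tsub_eq_0: "a \<le> b \<Longrightarrow> tsub a b = 0"
  unfolding tsub_def by (auto intro: diff_eq_0_ennreal simp: top.not_eq_extremum le_less_trans)

lemma sepimp_hempty_eq_0:
  "(\<And>h. g (s, h) \<le> f (s, h)) \<Longrightarrow> sepimp f g (s, hempty) = 0"
  unfolding sepimp_def by (simp add: tsub_eq_0)

lemma sepadd_mono: "g \<le> g' \<Longrightarrow> sepadd f g \<le> sepadd f g'"
  unfolding sepadd_def le_fun_def by (auto intro!: INF_mono' add_left_mono)

lemma tsub_mono: "a \<le> a' \<Longrightarrow> tsub a b \<le> tsub a' b"
  unfolding tsub_def by (auto intro: ennreal_minus_mono)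

lemma sepimp_mono: "g \<le> g' \<Longrightarrow> sepimp f g \<le> sepimp f g'"
  unfolding sepimp_def le_fun_def by (auto intro!: SUP_mono' tsub_mono)

lemma subst_rt_mono: "f \<le> g \<Longrightarrow> subst_rt f x a \<le> subst_rt g x a"
  unfolding subst_rt_def le_fun_def by auto

lemma subst_rt_sepadd:
  "subst_rt (sepadd f g) x a = sepadd (subst_rt f x a) (subst_rt g x a)"
  unfolding subst_rt_def sepadd_def by simp

lemma subst_rt_emp_rt: "subst_rt emp_rt x a = emp_rt"
  unfolding subst_rt_def emp_rt_def by simp

lemma subst_rt_pt:
  "subst_rt (pt e e') x a = pt (\<lambda>s. e (s(x := a s))) (\<lambda>s. e' (s(x := a s)))"
  unfolding subst_rt_def pt_def by simp

lemma subst_rt_bigsep_n: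
  "subst_rt (bigsep_n n F) x a = bigsep_n n (\<lambda>i. subst_rt (F i) x a)"
  by (induction n) (simp_all add: subst_rt_emp_rt subst_rt_sepadd)

lemma subst_rt_bigsep:
  "subst_rt (bigsep e F) x a = bigsep (\<lambda>s. e (s(x := a s))) (\<lambda>i. subst_rt (F i) x a)"
proof -
  have "subst_rt (bigsep e F) x a (s, h) = bigsep_n (e (s(x := a s))) F (s(x := a s), h)" for s h
    unfolding subst_rt_def bigsep_def by simp
  also have "\<dots> s h = subst_rt (bigsep_n (e (s(x := a s))) F) x a (s, h)" for s h
    unfolding subst_rt_def by simp
  finally show ?thesis
    unfolding bigsep_def subst_rt_bigsep_n by auto
qed

lemma ert_mono: "f \<le> g \<Longrightarrow> ert C f \<le> ert C g"
proof (induction C arbitrary: f g)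
  case (Alloc x e)
  then show ?case
    by (auto simp: le_fun_def intro!: SUP_mono' sepimp_mono[unfolded le_fun_def, rule_format]
          subst_rt_mono[unfolded le_fun_def, rule_format])
next
  case (Lookup x e)
  then have "sepadd (pt e (\<lambda>_. v)) (sepimp (pt e (\<lambda>_. v)) (subst_rt f x (\<lambda>_. v)))
      \<le> sepadd (pt e (\<lambda>_. v)) (sepimp (pt e (\<lambda>_. v)) (subst_rt g x (\<lambda>_. v)))" for v
    by (intro sepadd_mono sepimp_mono subst_rt_mono)
  then show ?case
    by (auto simp: le_fun_def intro!: INF_mono')
next
  case (PChoice C1 p C2)
  then show ?case
    by (auto simp: le_fun_def intro!: add_mono mult_left_mono)
next
  case (If b C1 C2)
  then show ?case
    by (auto simp: le_fun_def iverson_def intro!: add_mono)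
next
  case (While b C)
  then show ?case
    unfolding ert.simps by (intro lfp_mono) (auto simp: le_fun_def iverson_def)
qed (simp_all add: sepadd_mono sepimp_mono subst_rt_mono)

lemma mono_ert_While_functional:
  fixes C :: "'v prog"
  shows "mono (\<lambda>g \<sigma>. iverson (\<lambda>s. \<not> b s) f \<sigma> + iverson b (ert C g) \<sigma>)"
proof (intro monoI le_funI)
  fix g g' :: "'v rt" and \<sigma>
  assume "g \<le> g'"
  then have "ert C g \<sigma> \<le> ert C g' \<sigma>"
    by (rule le_funD[OF ert_mono])
  then show "iverson (\<lambda>s. \<not> b s) f \<sigma> + iverson b (ert C g) \<sigma>
      \<le> iverson (\<lambda>s. \<not> b s) f \<sigma> + iverson b (ert C g') \<sigma>"
    by (auto simp: iverson_def split: prod.split)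
qed

definition rt_indep :: "'v \<Rightarrow> 'v rt \<Rightarrow> bool" where
  "rt_indep y f \<longleftrightarrow> (\<forall>h. indep y (\<lambda>s. f (s, h)))"

lemma rt_indep_iff: "rt_indep y f \<longleftrightarrow> (\<forall>s v h. f (s(y := v), h) = f (s, h))"
  unfolding rt_indep_def indep_def by blast

lemma rt_indep_sepadd: "rt_indep y f \<Longrightarrow> rt_indep y g \<Longrightarrow> rt_indep y (sepadd f g)"
  unfolding rt_indep_iff sepadd_def by simp

lemma rt_indep_sepimp: "rt_indep y f \<Longrightarrow> rt_indep y g \<Longrightarrow> rt_indep y (sepimp f g)"
  unfolding rt_indep_iff sepimp_def by simp

lemma rt_indep_emp_rt: "rt_indep y emp_rt"
  unfolding rt_indep_iff emp_rt_def by simp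

lemma rt_indep_tm: "indep y e \<Longrightarrow> rt_indep y (tm e)"
  unfolding rt_indep_iff tm_def indep_def by simp

lemma rt_indep_pt: "indep y e \<Longrightarrow> indep y e' \<Longrightarrow> rt_indep y (pt e e')"
  unfolding rt_indep_iff pt_def indep_def by simp

lemma rt_indep_pt_any: "indep y e \<Longrightarrow> rt_indep y (pt_any e)"
  unfolding rt_indep_iff pt_any_def indep_def by simp

lemma rt_indep_bigsep:
  assumes "indep y e" and "\<And>i. rt_indep y (F i)"
  shows "rt_indep y (bigsep e F)"
proof -
  have "rt_indep y (bigsep_n n F)" for n
    by (induction n) (simp_all add: rt_indep_emp_rt rt_indep_sepadd assms(2))
  then show ?thesis
    using assms(1) unfolding rt_indep_iff bigsep_def indep_def by simp
qed

lemma rt_indep_subst_rt: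
  assumes "y \<noteq> x" and "indep y a" and "rt_indep y f"
  shows "rt_indep y (subst_rt f x a)"
  unfolding rt_indep_iff subst_rt_def
proof (clarsimp)
  fix s v h
  have "s(y := v, x := a (s(y := v))) = (s(x := a s))(y := v)"
    using assms(1,2) by (simp add: indep_def fun_upd_twist)
  then show "f (s(y := v, x := a (s(y := v))), h) = f (s(x := a s), h)"
    using assms(3) by (simp add: rt_indep_iff)
qed

lemma rt_indep_iverson: "indep y b \<Longrightarrow> rt_indep y f \<Longrightarrow> rt_indep y (iverson b f)"
  unfolding rt_indep_iff iverson_def indep_def by simp

lemma rt_indep_Sup: "\<forall>f\<in>M. rt_indep y f \<Longrightarrow> rt_indep y (Sup M)"
  unfolding rt_indep_iff by (auto simp: Sup_apply intro!: SUP_cong)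

lemma rt_indep_inf_var: "rt_indep y (inf_var y f)"
  unfolding rt_indep_iff inf_var_def by simp

lemma inf_var_le: "inf_var y f \<le> f"
proof (intro le_funI, clarify)
  fix s h
  have "(INF v. f (s(y := v), h)) \<le> f (s(y := s y), h)"
    by (rule INF_lower) simp
  then show "inf_var y f (s, h) \<le> f (s, h)"
    unfolding inf_var_def by simp
qed

lemma le_inf_var_if_rt_indep:
  assumes "rt_indep y f" and "f \<le> g"
  shows "f \<le> inf_var y g"
proof (intro le_funI, clarify)
  fix s h
  have "f (s, h) \<le> g (s(y := v), h)" for v
    using assms(1) le_funD[OF assms(2), of "(s(y := v), h)"] by (simp add: rt_indep_iff)
  then show "f (s, h) \<le> inf_var y g (s, h)"
    unfolding inf_var_def by (simp add: INF_greatest)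
qed

lemma rt_indep_ert:
  assumes "notin_prog y C" and "rt_indep y f"
  shows "rt_indep y (ert C f)"
  using assms
proof (induction C arbitrary: f)
  case (Tick e)
  then show ?case by (simp add: rt_indep_sepadd rt_indep_tm)
next
  case (Assign x e)
  then show ?case by (simp add: rt_indep_subst_rt)
next
  case (Alloc x e)
  then have "rt_indep y (sepimp (bigsep e (\<lambda>i. pt (\<lambda>_. v + i - 1) (\<lambda>_. 0))) (subst_rt f x (\<lambda>_. v)))"
    for v by (simp add: rt_indep_sepimp rt_indep_bigsep rt_indep_pt rt_indep_subst_rt indep_def)
  then show ?case by (simp add: rt_indep_iff)
next
  case (Mut e e')
  then show ?case by (simp add: rt_indep_sepadd rt_indep_sepimp rt_indep_pt rt_indep_pt_any)
next
  case (Lookup x e)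
  then have "rt_indep y (sepadd (pt e (\<lambda>_. v)) (sepimp (pt e (\<lambda>_. v)) (subst_rt f x (\<lambda>_. v))))"
    for v by (simp add: rt_indep_sepadd rt_indep_sepimp rt_indep_pt rt_indep_subst_rt indep_def)
  then show ?case by (simp add: rt_indep_iff)
next
  case (Free e)
  then show ?case by (simp add: rt_indep_sepadd rt_indep_pt_any)
next
  case (PChoice C1 p C2)
  then have "rt_indep y (ert C1 f)" "rt_indep y (ert C2 f)" "indep y p" by simp_all
  then show ?case by (simp add: rt_indep_iff indep_def)
next
  case (If b C1 C2)
  then have "rt_indep y (iverson b (ert C1 f))" "rt_indep y (iverson (\<lambda>s. \<not> b s) (ert C2 f))"
    by (simp_all add: rt_indep_iverson indep_def)
  then show ?case by (simp add: rt_indep_iff)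
next
  case (Seq C1 C2)
  then show ?case by simp
next
  case (While b C)
  show ?case
    unfolding ert.simps
  proof (induction rule: lfp_ordinal_induct[OF mono_ert_While_functional])
    case (1 g)
    then have "rt_indep y (iverson (\<lambda>s. \<not> b s) f)" "rt_indep y (iverson b (ert C g))"
      using While by (simp_all add: rt_indep_iverson indep_def)
    then show ?case by (simp add: rt_indep_iff)
  next
    case (2 M)
    then show ?case by (rule rt_indep_Sup)
  qed
qed

lemma ert_Mut_pt_le: "ert (Mut e e') (pt e e') \<le> pt_any e"
proof (intro le_funI, clarify)
  fix s h
  have "ert (Mut e e') (pt e e') (s, h)
      \<le> pt_any e (s, h) + sepimp (pt e e') (pt e e') (s, hempty)"
    by (simp add: sepadd_le_hempty_right)
  also have "\<dots> = pt_any e (s, h)"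
    by (simp add: sepimp_hempty_eq_0)
  finally show "ert (Mut e e') (pt e e') (s, h) \<le> pt_any e (s, h)" .
qed

lemma ert_Lookup_le:
  assumes "y \<noteq> x"
  shows "ert (Lookup x e) (sepadd (emp_and (\<lambda>s. s x = s z)) (pt (subst_exp e x y) (\<lambda>s. s z)))
    \<le> sepadd (emp_and (\<lambda>s. s x = s y)) (pt e (\<lambda>s. s z))"
    (is "ert _ ?F \<le> _")
proof (intro le_funI, clarify)
  fix s h
  let ?P = "pt e (\<lambda>_. s z)"
  show "ert (Lookup x e) ?F (s, h) \<le> sepadd (emp_and (\<lambda>s. s x = s y)) (pt e (\<lambda>s. s z)) (s, h)"
  proof (cases "s x = s y")
    case True
    have "subst_rt ?F x (\<lambda>_. s z) (s, h') = ?P (s, h')" for h'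
    proof -
      \<comment> \<open>after \<open>x := z\<close>, evaluating \<open>e[x/y]\<close> gives back \<open>e s\<close>, since \<open>s x = s y\<close>\<close>
      from True assms have "(s(x := s z))(x := (s(x := s z)) y) = s"
        by auto
      then show ?thesis
        by (simp add: subst_rt_def sepadd_emp_and subst_exp_def pt_def)
    qed
    then have wand_0: "sepimp ?P (subst_rt ?F x (\<lambda>_. s z)) (s, hempty) = 0"
      by (simp add: sepimp_hempty_eq_0)
    have "ert (Lookup x e) ?F (s, h) \<le> sepadd ?P (sepimp ?P (subst_rt ?F x (\<lambda>_. s z))) (s, h)"
      unfolding ert.simps prod.case by (rule INF_lower) simp
    also have "\<dots> \<le> ?P (s, h)"
      using sepadd_le_hempty_right[of ?P "sepimp ?P (subst_rt ?F x (\<lambda>_. s z))" s h] wand_0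
      by simp
    finally show ?thesis
      using True by (simp add: sepadd_emp_and pt_def)
  qed (simp add: sepadd_emp_and)
qed

lemma ert_Alloc_le_emp_rt:
  assumes "indep x e"
  shows "ert (Alloc x e) (bigsep e (\<lambda>i. pt (\<lambda>s. s x + i - 1) (\<lambda>_. 0))) \<le> emp_rt"
proof (intro le_funI, clarify)
  fix s h
  let ?Q = "\<lambda>v. bigsep e (\<lambda>i. pt (\<lambda>_. v + i - 1) (\<lambda>_. 0))"
  have "subst_rt (bigsep e (\<lambda>i. pt (\<lambda>s. s x + i - 1) (\<lambda>_. 0))) x (\<lambda>_. v) = ?Q v" for v
    using assms by (simp add: subst_rt_bigsep subst_rt_pt indep_def)
  then have "ert (Alloc x e) (bigsep e (\<lambda>i. pt (\<lambda>s. s x + i - 1) (\<lambda>_. 0))) (s, hempty) = 0"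
    by (simp add: sepimp_hempty_eq_0)
  then show "ert (Alloc x e) (bigsep e (\<lambda>i. pt (\<lambda>s. s x + i - 1) (\<lambda>_. 0))) (s, h) \<le> emp_rt (s, h)"
    by (cases "h = hempty") (simp_all add: emp_rt_def)
qed

lemma ert_inf_var_le:
  assumes "notin_prog y C" and "ert C f \<le> g"
  shows "ert C (inf_var y f) \<le> inf_var y g"
proof (rule le_inf_var_if_rt_indep)
  show "rt_indep y (ert C (inf_var y f))"
    using assms(1) rt_indep_inf_var by (rule rt_indep_ert)
  show "ert C (inf_var y f) \<le> g"
    using ert_mono[OF inf_var_le] assms(2) by (rule order_trans)
qed

theorem mainTheorem10:
  fixes C :: "'v::finite prog"
  assumes "wf_prog C"
  shows "(\<forall>(e::'v aexp) e'. ert (Mut e e') (pt e e') \<le> pt_any e)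
       \<and> (\<forall>(x::'v) y z (e::'v aexp). y \<noteq> x \<longrightarrow>
            ert (Lookup x e) (sepadd (emp_and (\<lambda>s. s x = s z)) (pt (subst_exp e x y) (\<lambda>s. s z)))
              \<le> sepadd (emp_and (\<lambda>s. s x = s y)) (pt e (\<lambda>s. s z)))
       \<and> (\<forall>(x::'v) (e::'v aexp). indep x e \<longrightarrow>
            ert (Alloc x e) (bigsep e (\<lambda>i. pt (\<lambda>s. s x + i - 1) (\<lambda>_. 0))) \<le> emp_rt)
       \<and> (\<forall>(f::'v rt) g y. notin_prog y C \<longrightarrow>
            ert C f \<le> g \<longrightarrow> ert C (inf_var y f) \<le> inf_var y g)"
  by (intro conjI allI impI ert_Mut_pt_le ert_Lookup_le ert_Alloc_le_emp_rt ert_inf_var_le)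

end
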